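(* Assume (i)–(iii) of the standing assumption below. Then: (1) $\mathcal S_{\mathrm{LP}}$ is the convex hull of a finite number $M$ of its extreme points $\xi^{*,1},\ldots,\xi^{*,M}$ (called modes). (2) $y^*\cdot\lambda=1$. (3) $z^*_k>0$ for every $k\in\mathcal K$. (4) For every potentially basic activity $j=(i,k)$ one has $y^*_i\mu_j=z^*_k$. (5) For every always nonbasic activity $j=(i,k)$ one has $y^*_i\mu_j<z^*_k$. (6) For every class $i\in\mathcal I$ there exists a potentially basic activity $j\in\mathcal J_i$. (7) $y^*_i>0$ for every $i\in\mathcal I$.
   Context: Let $\mathcal I$ (classes) and $\mathcal K$ (servers) be finite sets of cardinalities $I$ and $K$, and let $\mathcal J\subset\mathcal I\times\mathcal K$ (activities) have cardinality $J$. For $i\in\mathcal I$ let $\mathcal J_i=\{(i,k)\in\mathcal J\}$ and for $k\in\mathcal K$ let $\mathcal J^k=\{(i,k)\in\mathcal J\}$. Let $\lambda\in(0,\infty)^I$ and $\mu\in(0,\infty)^{\mathcal J}$. Let $R$ be the $I\times J$ matrix with $R_{ij}=\mu_j$ if $j\in\mathcal J_i$ and $R_{ij}=0$ otherwise, and $G$ the $K\times J$ matrix with $G_{kj}=1$ if $j\in\mathcal J^k$ and $0$ otherwise. The LP is: minimize $\rho$ over $(\xi,\rho)\in\mathbb R^J\times\mathbb R$ subject to $R\xi=\lambda$, $G\xi\le\rho 1_K$, $\xi\ge0$. The dual problem is: maximize $y\cdot\lambda$ over $(y,z)\in\mathbb R^I\times\mathbb R^K$ subject to $\sum_k z_k=1$,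 $yR\le zG$, $z\ge 0$. Standing assumption: (i) the optimal value of the LP is $\rho^*=1$; (ii) letting $\mathcal S_{\mathrm{LP}}=\{\xi:(\xi,1)\text{ is an optimal solution of the LP}\}$, every $\xi\in\mathcal S_{\mathrm{LP}}$ satisfies $(G\xi)_k=1$ for all $k\in\mathcal K$; (iii) the dual problem has a unique solution $(y^*,z^* )$. An activity $j$ is potentially basic if $\xi_j>0$ for some $\xi\in\mathcal S_{\mathrm{LP}}$, and always nonbasic otherwise. *)

theory Defs
  imports "HOL-Analysis.Analysis"
begin

text \<open>Classes are the elements of a finite type 'i, servers of a finite type 'k;
  activities form a set J of pairs (i,k).  Primal variables xi live in
  real^('i \<times> 'k) and are required to vanish outside J (so the primal variable
  space is a copy of R^J).\<close>

definition R_mult :: "('i::finite \<times> 'k::finite) set \<Rightarrow> ('i \<times> 'k \<Rightarrow> real) \<Rightarrow> real^('i \<times> 'k) \<Rightarrow> 'i \<Rightarrow> real" where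
  "R_mult J mu xi i = (\<Sum>k\<in>{k. (i,k) \<in> J}. mu (i,k) * xi $ (i,k))"

definition G_mult :: "('i::finite \<times> 'k::finite) set \<Rightarrow> real^('i \<times> 'k) \<Rightarrow> 'k \<Rightarrow> real" where
  "G_mult J xi k = (\<Sum>i\<in>{i. (i,k) \<in> J}. xi $ (i,k))"

definition lp_feasible ::
  "('i::finite \<times> 'k::finite) set \<Rightarrow> ('i \<times> 'k \<Rightarrow> real) \<Rightarrow> ('i \<Rightarrow> real) \<Rightarrow> real^('i \<times> 'k) \<Rightarrow> real \<Rightarrow> bool" where
  "lp_feasible J mu lam xi rho \<longleftrightarrow>
     (\<forall>i. R_mult J mu xi i = lam i) \<and> (\<forall>k. G_mult J xi k \<le> rho) \<and>
     (\<forall>j. 0 \<le> xi $ j) \<and> (\<forall>j. j \<notin> J \<longrightarrow> xi $ j = 0)"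

definition lp_optimal ::
  "('i::finite \<times> 'k::finite) set \<Rightarrow> ('i \<times> 'k \<Rightarrow> real) \<Rightarrow> ('i \<Rightarrow> real) \<Rightarrow> real^('i \<times> 'k) \<Rightarrow> real \<Rightarrow> bool" where
  "lp_optimal J mu lam xi rho \<longleftrightarrow> lp_feasible J mu lam xi rho \<and>
     (\<forall>xi' rho'. lp_feasible J mu lam xi' rho' \<longrightarrow> rho \<le> rho')"

definition S_LP ::
  "('i::finite \<times> 'k::finite) set \<Rightarrow> ('i \<times> 'k \<Rightarrow> real) \<Rightarrow> ('i \<Rightarrow> real) \<Rightarrow> (real^('i \<times> 'k)) set" where
  "S_LP J mu lam = {xi. lp_optimal J mu lam xi 1}"

definition dual_feasible ::
  "('i::finite \<times> 'k::finite) set \<Rightarrow> ('i \<times> 'k \<Rightarrow> real) \<Rightarrow> real^'i \<Rightarrow> real^'k \<Rightarrow> bool" where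
  "dual_feasible J mu y z \<longleftrightarrow> (\<Sum>k\<in>UNIV. z $ k) = 1 \<and>
     (\<forall>i k. (i,k) \<in> J \<longrightarrow> y $ i * mu (i,k) \<le> z $ k) \<and> (\<forall>k. 0 \<le> z $ k)"

definition dual_obj :: "('i::finite \<Rightarrow> real) \<Rightarrow> real^'i \<Rightarrow> real" where
  "dual_obj lam y = (\<Sum>i\<in>UNIV. y $ i * lam i)"

definition dual_optimal ::
  "('i::finite \<times> 'k::finite) set \<Rightarrow> ('i \<times> 'k \<Rightarrow> real) \<Rightarrow> ('i \<Rightarrow> real) \<Rightarrow> real^'i \<Rightarrow> real^'k \<Rightarrow> bool" where
  "dual_optimal J mu lam y z \<longleftrightarrow> dual_feasible J mu y z \<and>
     (\<forall>y' z'. dual_feasible J mu y' z' \<longrightarrow> dual_obj lam y' \<le> dual_obj lam y)"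

definition potentially_basic ::
  "('i::finite \<times> 'k::finite) set \<Rightarrow> ('i \<times> 'k \<Rightarrow> real) \<Rightarrow> ('i \<Rightarrow> real) \<Rightarrow> 'i \<times> 'k \<Rightarrow> bool" where
  "potentially_basic J mu lam j \<longleftrightarrow> j \<in> J \<and> (\<exists>xi\<in>S_LP J mu lam. xi $ j > 0)"

definition always_nonbasic ::
  "('i::finite \<times> 'k::finite) set \<Rightarrow> ('i \<times> 'k \<Rightarrow> real) \<Rightarrow> ('i \<Rightarrow> real) \<Rightarrow> 'i \<times> 'k \<Rightarrow> bool" where
  "always_nonbasic J mu lam j \<longleftrightarrow> j \<in> J \<and> \<not> potentially_basic J mu lam j"

end

theory Submission
  imports Defs
begin

text \<open>
  The optimal face is a bounded polyhedron, hence the convex hull of its finitely many extreme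
  points.  Everything about the dual comes from perturbing the LP by extra class demand \<open>a\<close>
  and extra server load \<open>b\<close>.  For \<open>(0, e\<^sub>k)\<close> (idle capacity at server \<open>k\<close>) and for
  \<open>(\<mu>\<^sub>j e\<^sub>i, e\<^sub>k)\<close> (one more unit of an always nonbasic activity \<open>j = (i,k)\<close>) no rescaled
  LP solution absorbs the perturbation, by full load and by nonbasicity respectively.  Farkas'
  lemma turns this into a dual direction \<open>(y, z)\<close> with \<open>y \<bullet> a < z \<bullet> b\<close> that may be added to
  \<open>(y\<^sup>*, z\<^sup>*)\<close> without losing optimality after renormalisation.  Uniqueness of the dual
  optimum forces \<open>(y, z)\<close> to be a positive multiple of \<open>(y\<^sup>*, z\<^sup>*)\<close>, which gives
  \<open>y\<^sup>* \<bullet> a < z\<^sup>* \<bullet> b\<close> and \<open>y\<^sup>* \<bullet> \<lambda> = 1\<close>.  The remaining claims are complementary slackness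
  and the positivity of every class demand.
\<close>

section \<open>The optimal face as a polytope\<close>

definition R_row :: "('i::finite \<times> 'k::finite) set \<Rightarrow> ('i \<times> 'k \<Rightarrow> real) \<Rightarrow> 'i \<Rightarrow> real^('i \<times> 'k)" where
  "R_row J mu i = (\<chi> j. if j \<in> J \<and> fst j = i then mu j else 0)"

definition G_row :: "('i::finite \<times> 'k::finite) set \<Rightarrow> 'k \<Rightarrow> real^('i \<times> 'k)" where
  "G_row J k = (\<chi> j. if j \<in> J \<and> snd j = k then 1 else 0)"

lemma R_mult_eq_inner: "R_mult J mu xi i = R_row J mu i \<bullet> xi"
proof -
  have "R_row J mu i \<bullet> xi = (\<Sum>j\<in>UNIV. if j \<in> J \<and> fst j = i then mu j * xi $ j else 0)"
    unfolding R_row_def inner_vec_def by (intro sum.cong) auto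
  also have "\<dots> = (\<Sum>j\<in>{j. j \<in> J \<and> fst j = i}. mu j * xi $ j)"
    by (simp add: sum.inter_filter[symmetric])
  also have "\<dots> = (\<Sum>k\<in>{k. (i,k) \<in> J}. mu (i,k) * xi $ (i,k))"
    by (rule sum.reindex_bij_witness[of _ "Pair i" snd]) auto
  finally show ?thesis unfolding R_mult_def ..
qed

lemma G_mult_eq_inner: "G_mult J xi k = G_row J k \<bullet> xi"
proof -
  have "G_row J k \<bullet> xi = (\<Sum>j\<in>UNIV. if j \<in> J \<and> snd j = k then xi $ j else 0)"
    unfolding G_row_def inner_vec_def by (intro sum.cong) auto
  also have "\<dots> = (\<Sum>j\<in>{j. j \<in> J \<and> snd j = k}. xi $ j)"
    by (simp add: sum.inter_filter[symmetric])
  also have "\<dots> = (\<Sum>i\<in>{i. (i,k) \<in> J}. xi $ (i,k))"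
    by (rule sum.reindex_bij_witness[of _ "\<lambda>i. (i,k)" fst]) auto
  finally show ?thesis unfolding G_mult_def ..
qed

lemma R_mult_add: "R_mult J mu (xi + xi') i = R_mult J mu xi i + R_mult J mu xi' i"
  by (simp add: R_mult_eq_inner inner_add_right)

lemma R_mult_scaleR: "R_mult J mu (c *\<^sub>R xi) i = c * R_mult J mu xi i"
  by (simp add: R_mult_eq_inner)

lemma R_mult_axis: "R_mult J mu (axis j 1) i = (if j \<in> J \<and> fst j = i then mu j else 0)"
  by (simp add: R_mult_eq_inner inner_axis R_row_def)

lemma G_mult_add: "G_mult J (xi + xi') k = G_mult J xi k + G_mult J xi' k"
  by (simp add: G_mult_eq_inner inner_add_right)

lemma G_mult_scaleR: "G_mult J (c *\<^sub>R xi) k = c * G_mult J xi k"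
  by (simp add: G_mult_eq_inner)

lemma G_mult_axis: "G_mult J (axis j 1) k = (if j \<in> J \<and> snd j = k then 1 else 0)"
  by (simp add: G_mult_eq_inner inner_axis G_row_def)

lemma G_mult_nonneg: "\<forall>j. 0 \<le> xi $ j \<Longrightarrow> 0 \<le> G_mult J xi k"
  unfolding G_mult_def by (simp add: sum_nonneg)

lemma polyhedron_lp_feasible: "polyhedron {xi. lp_feasible J mu lam xi rho}"
proof -
  have "{xi. lp_feasible J mu lam xi rho} =
      (\<Inter>i. {xi. R_row J mu i \<bullet> xi = lam i}) \<inter> (\<Inter>k. {xi. G_row J k \<bullet> xi \<le> rho}) \<inter>
      (\<Inter>j. {xi. axis j 1 \<bullet> xi \<ge> 0}) \<inter> (\<Inter>j\<in>-J. {xi. axis j 1 \<bullet> xi = 0})"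
    by (auto simp: lp_feasible_def R_mult_eq_inner G_mult_eq_inner inner_axis')
  moreover have "polyhedron \<dots>"
    by (intro polyhedron_Int polyhedron_Inter)
       (auto simp: polyhedron_hyperplane polyhedron_halfspace_le polyhedron_halfspace_ge)
  ultimately show ?thesis by simp
qed

lemma bounded_lp_feasible:
  fixes J :: "('i::finite \<times> 'k::finite) set"
  shows "bounded {xi. lp_feasible J mu lam xi rho}"
proof -
  have "\<bar>xi $ j\<bar> \<le> \<bar>rho\<bar>" if "lp_feasible J mu lam xi rho" for xi j
  proof (cases "j \<in> J")
    case True
    obtain i k where j: "j = (i,k)" by fastforce
    have "xi $ (i,k) \<le> G_mult J xi k"
      unfolding G_mult_def using that True j by (intro member_le_sum) (auto simp: lp_feasible_def)
    also have "\<dots> \<le> rho" using that by (simp add: lp_feasible_def)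
    finally show ?thesis using that j by (simp add: lp_feasible_def)
  qed (use that in \<open>cases j, auto simp: lp_feasible_def\<close>)
  then have "norm xi \<le> CARD('i \<times> 'k) * \<bar>rho\<bar>" if "lp_feasible J mu lam xi rho" for xi
    using that order_trans[OF norm_le_l1_cart sum_mono[of UNIV "\<lambda>j. \<bar>xi $ j\<bar>" "\<lambda>_. \<bar>rho\<bar>"]]
    by simp
  then show ?thesis unfolding bounded_iff by blast
qed

lemma bounded_polyhedron_convex_hull_extreme_points:
  fixes S :: "'a::euclidean_space set"
  assumes "polyhedron S" "bounded S"
  shows "finite {x. x extreme_point_of S}" "S = convex hull {x. x extreme_point_of S}"
proof -
  show "finite {x. x extreme_point_of S}" using finite_polyhedron_extreme_points[OF assms(1)] .
  have "compact S" using assms by (simp add: compact_eq_bounded_closed polyhedron_imp_closed)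
  then show "S = convex hull {x. x extreme_point_of S}"
    using Krein_Milman_Minkowski polyhedron_imp_convex[OF assms(1)] by blast
qed

lemma S_LP_eq_lp_feasible:
  assumes "\<exists>xi. lp_optimal J mu lam xi 1"
  shows "S_LP J mu lam = {xi. lp_feasible J mu lam xi 1}"
  using assms unfolding S_LP_def lp_optimal_def by auto

lemma S_LP_convex_hull_extreme_points:
  fixes J :: "('i::finite \<times> 'k::finite) set"
  assumes "\<exists>xi. lp_optimal J mu lam xi 1"
  shows "\<exists>E. finite E \<and> (\<forall>e\<in>E. e extreme_point_of S_LP J mu lam) \<and> S_LP J mu lam = convex hull E"
proof (intro exI conjI)
  have "polyhedron (S_LP J mu lam)" "bounded (S_LP J mu lam)"
    unfolding S_LP_eq_lp_feasible[OF assms] by (rule polyhedron_lp_feasible bounded_lp_feasible)+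
  then show "finite {x. x extreme_point_of S_LP J mu lam}"
    and "S_LP J mu lam = convex hull {x. x extreme_point_of S_LP J mu lam}"
    by (rule bounded_polyhedron_convex_hull_extreme_points)+
qed simp

lemma lp_feasible_class_served:
  assumes "lp_feasible J mu lam xi rho" "0 < lam i"
  shows "\<exists>k. (i,k) \<in> J \<and> 0 < xi $ (i,k)"
proof (rule ccontr)
  assume "\<not> ?thesis"
  moreover have "0 \<le> xi $ j" for j using assms(1) unfolding lp_feasible_def by blast
  ultimately have "R_mult J mu xi i = 0"
    unfolding R_mult_def by (intro sum.neutral) (force simp: order.order_iff_strict)
  with assms show False by (simp add: lp_feasible_def)
qed

section \<open>Weak duality and complementary slackness\<close>

lemma sum_activities_by_class:
  fixes J :: "('i::finite \<times> 'k::finite) set"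
  shows "(\<Sum>i\<in>UNIV. \<Sum>k\<in>{k. (i,k) \<in> J}. f (i,k)) = (\<Sum>j\<in>J. f j)"
proof -
  have "Sigma UNIV (\<lambda>i. {k. (i,k) \<in> J}) = J" by auto
  then show ?thesis by (simp add: sum.Sigma)
qed

lemma sum_activities_by_server:
  fixes J :: "('i::finite \<times> 'k::finite) set"
  shows "(\<Sum>k\<in>UNIV. \<Sum>i\<in>{i. (i,k) \<in> J}. f (i,k)) = (\<Sum>j\<in>J. f j)"
  using sum.swap_restrict[of UNIV UNIV "\<lambda>k i. f (i,k)" "\<lambda>k i. (i,k) \<in> J"]
  by (simp add: sum_activities_by_class)

lemma sum_R_mult:
  fixes J :: "('i::finite \<times> 'k::finite) set"
  shows "(\<Sum>i\<in>UNIV. y $ i * R_mult J mu xi i) = (\<Sum>j\<in>J. y $ fst j * mu j * xi $ j)"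
  unfolding R_mult_def sum_distrib_left
  using sum_activities_by_class[where f="\<lambda>j. y $ fst j * mu j * xi $ j"] by (simp add: mult.assoc)

lemma sum_G_mult:
  fixes J :: "('i::finite \<times> 'k::finite) set"
  shows "(\<Sum>k\<in>UNIV. z $ k * G_mult J xi k) = (\<Sum>j\<in>J. z $ snd j * xi $ j)"
  unfolding G_mult_def sum_distrib_left
  using sum_activities_by_server[where f="\<lambda>j. z $ snd j * xi $ j"] by simp

lemma lp_dual_gap:
  fixes J :: "('i::finite \<times> 'k::finite) set"
  shows "(\<Sum>k\<in>UNIV. z $ k * G_mult J xi k) - (\<Sum>i\<in>UNIV. y $ i * R_mult J mu xi i)
    = (\<Sum>j\<in>J. (z $ snd j - y $ fst j * mu j) * xi $ j)"
  by (simp add: sum_R_mult sum_G_mult sum_subtractf[symmetric] left_diff_distrib)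

lemma lp_dual_gap_nonneg:
  assumes "dual_feasible J mu y z" "j \<in> J" "0 \<le> xi $ j"
  shows "0 \<le> (z $ snd j - y $ fst j * mu j) * xi $ j"
  using assms by (cases j) (auto simp: dual_feasible_def)

lemma weak_duality:
  fixes J :: "('i::finite \<times> 'k::finite) set"
  assumes dual: "dual_feasible J mu y z" and primal: "lp_feasible J mu lam xi rho"
  shows "dual_obj lam y \<le> rho"
proof -
  have xi_nonneg: "0 \<le> xi $ j" for j using primal unfolding lp_feasible_def by blast
  have "dual_obj lam y = (\<Sum>i\<in>UNIV. y $ i * R_mult J mu xi i)"
    using primal by (simp add: dual_obj_def lp_feasible_def)
  also have "\<dots> \<le> (\<Sum>k\<in>UNIV. z $ k * G_mult J xi k)"
  proof -
    have "0 \<le> (\<Sum>j\<in>J. (z $ snd j - y $ fst j * mu j) * xi $ j)"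
      by (intro sum_nonneg lp_dual_gap_nonneg[OF dual _ xi_nonneg])
    then show ?thesis using lp_dual_gap[of z J xi y mu] by simp
  qed
  also have "\<dots> \<le> (\<Sum>k\<in>UNIV. z $ k * rho)"
    using dual primal by (intro sum_mono mult_left_mono) (auto simp: dual_feasible_def lp_feasible_def)
  also have "\<dots> = rho"
    using dual by (simp add: dual_feasible_def sum_distrib_right[symmetric])
  finally show ?thesis .
qed

lemma complementary_slackness:
  fixes J :: "('i::finite \<times> 'k::finite) set"
  assumes dual: "dual_feasible J mu y z" and primal: "lp_feasible J mu lam xi rho"
    and full_load: "\<forall>k. G_mult J xi k = rho" and obj: "dual_obj lam y = rho"
    and "(i,k) \<in> J" "0 < xi $ (i,k)"
  shows "y $ i * mu (i,k) = z $ k"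
proof -
  have "(\<Sum>j\<in>J. (z $ snd j - y $ fst j * mu j) * xi $ j)
      = (\<Sum>k\<in>UNIV. z $ k * G_mult J xi k) - (\<Sum>i\<in>UNIV. y $ i * R_mult J mu xi i)"
    by (rule lp_dual_gap[symmetric])
  also have "\<dots> = 0"
    using dual primal full_load obj
    by (simp add: dual_feasible_def lp_feasible_def dual_obj_def sum_distrib_right[symmetric])
  finally have gap_zero: "(\<Sum>j\<in>J. (z $ snd j - y $ fst j * mu j) * xi $ j) = 0" .
  have "0 \<le> xi $ j" for j using primal unfolding lp_feasible_def by blast
  then have "\<forall>j\<in>J. (z $ snd j - y $ fst j * mu j) * xi $ j = 0"
    using gap_zero lp_dual_gap_nonneg[OF dual] by (simp add: sum_nonneg_eq_0_iff)
  then have "(z $ k - y $ i * mu (i,k)) * xi $ (i,k) = 0" using \<open>(i,k) \<in> J\<close> by fastforce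
  then show ?thesis using \<open>0 < xi $ (i,k)\<close> by simp
qed

lemma potentially_basic_dual_tight:
  fixes J :: "('i::finite \<times> 'k::finite) set"
  assumes opt_val: "\<exists>xi. lp_optimal J mu lam xi 1"
    and full_load: "\<forall>xi\<in>S_LP J mu lam. \<forall>k. G_mult J xi k = 1"
    and dual: "dual_feasible J mu y z" and obj: "dual_obj lam y = 1"
    and "potentially_basic J mu lam (i,k)"
  shows "y $ i * mu (i,k) = z $ k"
proof -
  obtain xi where "xi \<in> S_LP J mu lam" "(i,k) \<in> J" "0 < xi $ (i,k)"
    using assms(5) unfolding potentially_basic_def by blast
  then show ?thesis
    using complementary_slackness[OF dual _ _ obj] full_load S_LP_eq_lp_feasible[OF opt_val] by blast
qed

section \<open>Farkas' lemma for perturbed systems\<close>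

lemma farkas_convex_cone_hull:
  fixes b :: "'a::euclidean_space"
  assumes "finite S" "b \<notin> convex_cone hull S"
  shows "\<exists>a. (\<forall>s\<in>S. a \<bullet> s \<le> 0) \<and> 0 < a \<bullet> b"
proof -
  obtain a \<beta> where ab: "a \<bullet> b < \<beta>" and a_cone: "\<forall>x\<in>convex_cone hull S. \<beta> < a \<bullet> x"
    using separating_hyperplane_closed_point[OF convex_convex_cone_hull
        closed_convex_cone_hull[OF assms(1)] assms(2)] by blast
  have "\<beta> < 0" using a_cone convex_cone_hull_contains_0 by fastforce
  have "0 \<le> a \<bullet> s" if "s \<in> S" for s
  proof (rule ccontr)
    assume neg: "\<not> 0 \<le> a \<bullet> s"
    \<comment> \<open>the cone contains the multiple of s on which a takes the value \<beta>\<close>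
    have "(\<beta> / (a \<bullet> s)) *\<^sub>R s \<in> convex_cone hull S"
      using neg \<open>\<beta> < 0\<close> that by (intro convex_cone_hull_mul hull_inc) (auto simp: divide_nonpos_neg)
    with a_cone neg show False by auto
  qed
  then show ?thesis using ab \<open>\<beta> < 0\<close> by (intro exI[of _ "-a"]) auto
qed

text \<open>Extra class demand \<open>a\<close> and extra server load \<open>b\<close> that some multiple \<open>t\<close> of the LP
  (demand \<open>t \<lambda>\<close>, capacity \<open>t\<close>) can absorb.\<close>

definition perturbed_feasible ::
  "('i::finite \<times> 'k::finite) set \<Rightarrow> ('i \<times> 'k \<Rightarrow> real) \<Rightarrow> ('i \<Rightarrow> real) \<Rightarrow>
    real^'i \<Rightarrow> real^'k \<Rightarrow> bool" where
  "perturbed_feasible J mu lam a b \<longleftrightarrow>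
    (\<exists>xi t. (\<forall>j. 0 \<le> xi $ j) \<and> (\<forall>j. j \<notin> J \<longrightarrow> xi $ j = 0) \<and>
      (\<forall>i. R_mult J mu xi i + a $ i = t * lam i) \<and> (\<forall>k. G_mult J xi k + b $ k \<le> t))"

definition dual_improving_direction ::
  "('i::finite \<times> 'k::finite) set \<Rightarrow> ('i \<times> 'k \<Rightarrow> real) \<Rightarrow> ('i \<Rightarrow> real) \<Rightarrow>
    real^'i \<Rightarrow> real^'k \<Rightarrow> bool" where
  "dual_improving_direction J mu lam y z \<longleftrightarrow>
    (\<forall>i k. (i,k) \<in> J \<longrightarrow> y $ i * mu (i,k) \<le> z $ k) \<and> (\<forall>k. 0 \<le> z $ k) \<and>
    (\<Sum>k\<in>UNIV. z $ k) \<le> dual_obj lam y"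

text \<open>With a server slack \<open>s\<close>, the perturbed system reads
  \<open>homogenized_map (xi, s, t) = (-a, b)\<close> for \<open>(xi, s, t)\<close> in the cone spanned by
  \<open>homogenized_generators\<close>; its Farkas alternative is a dual improving direction.\<close>

definition homogenized_map ::
  "('i::finite \<times> 'k::finite) set \<Rightarrow> ('i \<times> 'k \<Rightarrow> real) \<Rightarrow> ('i \<Rightarrow> real) \<Rightarrow>
    (real^('i \<times> 'k)) \<times> (real^'k) \<times> real \<Rightarrow> (real^'i) \<times> (real^'k)" where
  "homogenized_map J mu lam p =
    (\<chi> i. R_mult J mu (fst p) i - snd (snd p) * lam i,
     \<chi> k. snd (snd p) - G_mult J (fst p) k - fst (snd p) $ k)"

definition homogenized_generators ::
  "('i::finite \<times> 'k::finite) set \<Rightarrow> ((real^('i \<times> 'k)) \<times> (real^'k) \<times> real) set" where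
  "homogenized_generators J =
    (\<lambda>j. (axis j 1, 0, 0)) ` J \<union> range (\<lambda>k. (0, axis k 1, 0)) \<union> {(0, 0, 1)}"

lemma linear_homogenized_map: "linear (homogenized_map J mu lam)"
  by (rule linearI) (simp_all add: homogenized_map_def vec_eq_iff R_mult_add G_mult_add
      R_mult_scaleR G_mult_scaleR algebra_simps)

lemma perturbed_feasible_if_in_homogenized_cone:
  assumes "(-a, b) \<in> homogenized_map J mu lam ` (convex_cone hull homogenized_generators J)"
  shows "perturbed_feasible J mu lam a b"
proof -
  obtain xi s t where cone: "(xi, s, t) \<in> convex_cone hull homogenized_generators J"
    and "homogenized_map J mu lam (xi, s, t) = (-a, b)"
    using assms by auto
  then have R: "R_mult J mu xi i - t * lam i = - a $ i" and G: "t - G_mult J xi k - s $ k = b $ k"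
    for i k by (simp_all add: homogenized_map_def vec_eq_iff)
  have "convex_cone hull homogenized_generators J \<subseteq>
      {(xi, s, t). (\<forall>j. 0 \<le> xi $ j) \<and> (\<forall>j. j \<notin> J \<longrightarrow> xi $ j = 0) \<and> (\<forall>k. 0 \<le> s $ k)}"
    by (rule hull_minimal) (auto simp: homogenized_generators_def convex_cone_iff axis_def zero_prod_def)
  with cone have xi_ok: "(\<forall>j. 0 \<le> xi $ j) \<and> (\<forall>j. j \<notin> J \<longrightarrow> xi $ j = 0)"
    and s_nonneg: "0 \<le> s $ k" for k
    by blast+
  show ?thesis
    unfolding perturbed_feasible_def
  proof (intro exI[of _ xi] exI[of _ t] conjI allI)
    show "R_mult J mu xi i + a $ i = t * lam i" for i using R[of i] by simp
    show "G_mult J xi k + b $ k \<le> t" for k using G[of k] s_nonneg[of k] by simp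
  qed (use xi_ok in blast)+
qed

lemma dual_improving_direction_if_homogenized_dual:
  assumes dir: "\<forall>v\<in>homogenized_generators J. (y, z) \<bullet> homogenized_map J mu lam v \<le> 0"
  shows "dual_improving_direction J mu lam y z"
  unfolding dual_improving_direction_def
proof (intro conjI allI impI)
  fix i k assume "(i,k) \<in> J"
  moreover have "homogenized_map J mu lam (axis (i,k) 1, 0, 0) = (mu (i,k) *\<^sub>R axis i 1, - axis k 1)"
    using \<open>(i,k) \<in> J\<close>
    by (simp add: homogenized_map_def vec_eq_iff R_mult_axis G_mult_axis) (simp add: axis_def)
  ultimately show "y $ i * mu (i,k) \<le> z $ k"
    using dir[rule_format, of "(axis (i,k) 1, 0, 0)"]
    by (simp add: homogenized_generators_def inner_axis mult.commute)
next
  fix k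
  have "homogenized_map J mu lam (0, axis k 1, 0) = (0, - axis k 1)"
    by (simp add: homogenized_map_def vec_eq_iff R_mult_eq_inner G_mult_eq_inner)
  then show "0 \<le> z $ k"
    using dir[rule_format, of "(0, axis k 1, 0)"] by (simp add: homogenized_generators_def inner_axis)
next
  have "homogenized_map J mu lam (0, 0, 1) = (- (\<chi> i. lam i), \<chi> k. 1)"
    by (simp add: homogenized_map_def vec_eq_iff R_mult_eq_inner G_mult_eq_inner)
  then show "(\<Sum>k\<in>UNIV. z $ k) \<le> dual_obj lam y"
    using dir[rule_format, of "(0, 0, 1)"]
    by (simp add: homogenized_generators_def inner_vec_def dual_obj_def sum_negf)
qed

lemma dual_improving_direction_if_not_perturbed_feasible:
  fixes J :: "('i::finite \<times> 'k::finite) set" and a :: "real^'i" and b :: "real^'k"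
  assumes "\<not> perturbed_feasible J mu lam a b"
  shows "\<exists>y z. dual_improving_direction J mu lam y z \<and> y \<bullet> a < z \<bullet> b"
proof -
  have "finite (homogenized_generators J)" by (simp add: homogenized_generators_def)
  moreover have "(-a, b) \<notin> convex_cone hull (homogenized_map J mu lam ` homogenized_generators J)"
    unfolding convex_cone_hull_linear_image[OF linear_homogenized_map]
    using assms perturbed_feasible_if_in_homogenized_cone by blast
  ultimately obtain w
    where "\<forall>v\<in>homogenized_map J mu lam ` homogenized_generators J. w \<bullet> v \<le> 0" and "0 < w \<bullet> (-a, b)"
    using farkas_convex_cone_hull[OF finite_imageI] by blast
  moreover obtain y z where "w = (y, z)" by fastforce
  ultimately show ?thesis using dual_improving_direction_if_homogenized_dual by fastforce
qed

section \<open>Perturbations the LP cannot absorb\<close>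

lemma scaled_solution_in_S_LP:
  assumes opt_val: "\<exists>xi. lp_optimal J mu lam xi 1"
    and "\<forall>j. 0 \<le> xi $ j" "\<forall>j. j \<notin> J \<longrightarrow> xi $ j = 0"
    and "\<forall>i. R_mult J mu xi i = t * lam i" "\<forall>k. G_mult J xi k \<le> t" "0 < t"
  shows "(1 / t) *\<^sub>R xi \<in> S_LP J mu lam"
  using assms by (simp add: S_LP_eq_lp_feasible lp_feasible_def R_mult_scaleR G_mult_scaleR)

lemma server_load_not_perturbed_feasible:
  fixes J :: "('i::finite \<times> 'k::finite) set"
  assumes opt_val: "\<exists>xi. lp_optimal J mu lam xi 1"
    and full_load: "\<forall>xi\<in>S_LP J mu lam. \<forall>k. G_mult J xi k = 1"
  shows "\<not> perturbed_feasible J mu lam 0 (axis k 1)"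
proof
  assume "perturbed_feasible J mu lam 0 (axis k 1)"
  then obtain xi t where xi: "\<forall>j. 0 \<le> xi $ j" "\<forall>j. j \<notin> J \<longrightarrow> xi $ j = 0"
    and R: "\<forall>i. R_mult J mu xi i = t * lam i" and G: "\<forall>k'. G_mult J xi k' + axis k 1 $ k' \<le> t"
    unfolding perturbed_feasible_def by auto
  have G_k: "G_mult J xi k + 1 \<le> t" using G by (metis axis_nth)
  moreover have "0 \<le> G_mult J xi k" using G_mult_nonneg[OF xi(1)] .
  ultimately have "0 < t" by simp
  have "G_mult J xi k' \<le> t" for k'
    using G[rule_format, of k'] by (simp add: axis_def split: if_splits)
  then have "(1 / t) *\<^sub>R xi \<in> S_LP J mu lam"
    using scaled_solution_in_S_LP[OF opt_val xi R] \<open>0 < t\<close> by blast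
  then have "G_mult J ((1 / t) *\<^sub>R xi) k = 1" using full_load by blast
  then have "G_mult J xi k = t" using \<open>0 < t\<close> by (simp add: G_mult_scaleR)
  with G_k show False by simp
qed

lemma always_nonbasic_not_perturbed_feasible:
  fixes J :: "('i::finite \<times> 'k::finite) set"
  assumes opt_val: "\<exists>xi. lp_optimal J mu lam xi 1"
    and nonbasic: "always_nonbasic J mu lam (i,k)"
  shows "\<not> perturbed_feasible J mu lam (mu (i,k) *\<^sub>R axis i 1) (axis k 1)"
proof
  assume "perturbed_feasible J mu lam (mu (i,k) *\<^sub>R axis i 1) (axis k 1)"
  then obtain xi t where xi: "\<forall>j. 0 \<le> xi $ j" "\<forall>j. j \<notin> J \<longrightarrow> xi $ j = 0"
    and R: "\<forall>i'. R_mult J mu xi i' + (mu (i,k) *\<^sub>R axis i 1) $ i' = t * lam i'"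
    and G: "\<forall>k'. G_mult J xi k' + axis k 1 $ k' \<le> t"
    unfolding perturbed_feasible_def by auto
  have "(i,k) \<in> J" using nonbasic by (simp add: always_nonbasic_def)
  \<comment> \<open>route one more unit of activity (i,k) and rescale\<close>
  define xi' where "xi' = xi + axis (i,k) 1"
  have "0 \<le> G_mult J xi k" using G_mult_nonneg[OF xi(1)] .
  then have "0 < t" using G[rule_format, of k] by simp
  have "\<forall>j. 0 \<le> xi' $ j" "\<forall>j. j \<notin> J \<longrightarrow> xi' $ j = 0"
    using xi \<open>(i,k) \<in> J\<close> by (auto simp: xi'_def axis_def)
  moreover have "R_mult J mu xi' i' = R_mult J mu xi i' + (mu (i,k) *\<^sub>R axis i 1) $ i'" for i'
    using \<open>(i,k) \<in> J\<close> by (simp add: xi'_def R_mult_add R_mult_axis) (simp add: axis_def)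
  moreover have "G_mult J xi' k' = G_mult J xi k' + axis k 1 $ k'" for k'
    using \<open>(i,k) \<in> J\<close> by (simp add: xi'_def G_mult_add G_mult_axis) (simp add: axis_def)
  ultimately have "(1 / t) *\<^sub>R xi' \<in> S_LP J mu lam"
    using scaled_solution_in_S_LP[OF opt_val] R G \<open>0 < t\<close> by simp
  moreover have "0 < ((1 / t) *\<^sub>R xi') $ (i,k)"
    using xi \<open>0 < t\<close> by (simp add: xi'_def add_nonneg_pos)
  ultimately have "potentially_basic J mu lam (i,k)"
    using \<open>(i,k) \<in> J\<close> unfolding potentially_basic_def by blast
  with nonbasic show False by (simp add: always_nonbasic_def)
qed

section \<open>Consequences of a unique dual optimum\<close>

lemma dual_obj_add: "dual_obj lam (y + y') = dual_obj lam y + dual_obj lam y'"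
  by (simp add: dual_obj_def sum.distrib distrib_right)

lemma dual_obj_scaleR: "dual_obj lam (c *\<^sub>R y) = c * dual_obj lam y"
  by (simp add: dual_obj_def sum_distrib_left mult.assoc)

lemma dual_feasible_add_improving_direction:
  fixes J :: "('i::finite \<times> 'k::finite) set"
  assumes feasible: "dual_feasible J mu y z" and dir: "dual_improving_direction J mu lam dy dz"
  defines "c \<equiv> 1 / (1 + (\<Sum>k\<in>UNIV. dz $ k))"
  shows "dual_feasible J mu (c *\<^sub>R (y + dy)) (c *\<^sub>R (z + dz))"
  unfolding dual_feasible_def
proof (intro conjI allI impI)
  have "0 \<le> (\<Sum>k\<in>UNIV. dz $ k)" using dir by (simp add: dual_improving_direction_def sum_nonneg)
  then have "0 < c" by (simp add: c_def)
  show "(\<Sum>k\<in>UNIV. (c *\<^sub>R (z + dz)) $ k) = 1"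
    using feasible \<open>0 \<le> (\<Sum>k\<in>UNIV. dz $ k)\<close>
    by (simp add: c_def dual_feasible_def sum.distrib sum_divide_distrib[symmetric])
  show "(c *\<^sub>R (y + dy)) $ i * mu (i,k) \<le> (c *\<^sub>R (z + dz)) $ k" if "(i,k) \<in> J" for i k
  proof -
    have "(y $ i + dy $ i) * mu (i,k) \<le> z $ k + dz $ k"
      using feasible dir that
      by (simp add: dual_feasible_def dual_improving_direction_def distrib_right add_mono)
    then show ?thesis using \<open>0 < c\<close> by (simp add: mult.assoc)
  qed
  show "0 \<le> (c *\<^sub>R (z + dz)) $ k" for k
    using feasible dir \<open>0 < c\<close> by (simp add: dual_feasible_def dual_improving_direction_def)
qed

lemma dual_improving_direction_proportional:
  fixes J :: "('i::finite \<times> 'k::finite) set" and ys y :: "real^'i" and zs z :: "real^'k"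
  assumes opt: "dual_optimal J mu lam ys zs"
    and unique: "\<forall>y z. dual_optimal J mu lam y z \<longrightarrow> y = ys \<and> z = zs"
    and obj_le: "dual_obj lam ys \<le> 1"
    and dir: "dual_improving_direction J mu lam y z"
  shows "y = (\<Sum>k\<in>UNIV. z $ k) *\<^sub>R ys \<and> z = (\<Sum>k\<in>UNIV. z $ k) *\<^sub>R zs"
proof -
  define \<sigma> where "\<sigma> = (\<Sum>k\<in>UNIV. z $ k)"
  have "0 \<le> \<sigma>" using dir by (simp add: \<sigma>_def dual_improving_direction_def sum_nonneg)
  define y' where "y' = (1 / (1 + \<sigma>)) *\<^sub>R (ys + y)"
  define z' where "z' = (1 / (1 + \<sigma>)) *\<^sub>R (zs + z)"
  have "dual_feasible J mu y' z'"
    using dual_feasible_add_improving_direction[OF _ dir] opt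
    by (simp add: dual_optimal_def y'_def z'_def \<sigma>_def)
  moreover have "dual_obj lam ys \<le> dual_obj lam y'"
  proof -
    have "dual_obj lam ys * (1 + \<sigma>) \<le> dual_obj lam ys + \<sigma>"
      using obj_le \<open>0 \<le> \<sigma>\<close> by (simp add: algebra_simps mult_left_le)
    also have "\<dots> \<le> dual_obj lam ys + dual_obj lam y"
      using dir by (simp add: \<sigma>_def dual_improving_direction_def)
    also have "\<dots> = dual_obj lam y' * (1 + \<sigma>)"
      using \<open>0 \<le> \<sigma>\<close> by (simp add: y'_def dual_obj_add dual_obj_scaleR)
    finally show ?thesis using \<open>0 \<le> \<sigma>\<close> by simp
  qed
  ultimately have "dual_optimal J mu lam y' z'"
    using opt by (force simp: dual_optimal_def)
  then have "y' = ys" "z' = zs" using unique by blast+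
  moreover have "(1 + \<sigma>) *\<^sub>R ((1 / (1 + \<sigma>)) *\<^sub>R v) = v" for v :: "real^'n"
    using \<open>0 \<le> \<sigma>\<close> by simp
  ultimately have "ys + y = (1 + \<sigma>) *\<^sub>R ys" "zs + z = (1 + \<sigma>) *\<^sub>R zs"
    unfolding y'_def z'_def by metis+
  then have "y = \<sigma> *\<^sub>R ys \<and> z = \<sigma> *\<^sub>R zs" by (simp add: algebra_simps)
  then show ?thesis unfolding \<sigma>_def .
qed

lemma unique_dual_optimum_if_not_perturbed_feasible:
  fixes J :: "('i::finite \<times> 'k::finite) set" and ys a :: "real^'i" and zs b :: "real^'k"
  assumes opt: "dual_optimal J mu lam ys zs"
    and unique: "\<forall>y z. dual_optimal J mu lam y z \<longrightarrow> y = ys \<and> z = zs"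
    and obj_le: "dual_obj lam ys \<le> 1"
    and infeasible: "\<not> perturbed_feasible J mu lam a b"
  shows "dual_obj lam ys = 1" and "ys \<bullet> a < zs \<bullet> b"
proof -
  obtain y z where dir: "dual_improving_direction J mu lam y z" and "y \<bullet> a < z \<bullet> b"
    using dual_improving_direction_if_not_perturbed_feasible[OF infeasible] by blast
  define \<sigma> where "\<sigma> = (\<Sum>k\<in>UNIV. z $ k)"
  have "0 \<le> \<sigma>" using dir by (simp add: \<sigma>_def dual_improving_direction_def sum_nonneg)
  have y: "y = \<sigma> *\<^sub>R ys" and z: "z = \<sigma> *\<^sub>R zs"
    using dual_improving_direction_proportional[OF opt unique obj_le dir] by (simp_all add: \<sigma>_def)
  have "\<sigma> * (ys \<bullet> a) < \<sigma> * (zs \<bullet> b)" using \<open>y \<bullet> a < z \<bullet> b\<close> by (simp add: y z)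
  then have "0 < \<sigma>" and strict: "ys \<bullet> a < zs \<bullet> b"
    using \<open>0 \<le> \<sigma>\<close> by (auto simp: mult_less_cancel_left)
  show "ys \<bullet> a < zs \<bullet> b" by (rule strict)
  have "\<sigma> * 1 \<le> \<sigma> * dual_obj lam ys"
    using dir by (simp add: dual_improving_direction_def y dual_obj_scaleR \<sigma>_def[symmetric])
  then show "dual_obj lam ys = 1" using \<open>0 < \<sigma>\<close> obj_le by simp
qed

theorem lemma2p3:
  fixes J :: "('i::finite \<times> 'k::finite) set"
    and mu :: "'i \<times> 'k \<Rightarrow> real" and lam :: "'i \<Rightarrow> real"
    and ys :: "real^'i" and zs :: "real^'k"
  assumes lam_pos: "\<forall>i. 0 < lam i"
    and mu_pos: "\<forall>j\<in>J. 0 < mu j"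
    and opt_val: "\<exists>xi. lp_optimal J mu lam xi 1"
    and full_load: "\<forall>xi\<in>S_LP J mu lam. \<forall>k. G_mult J xi k = 1"
    and dual_opt: "dual_optimal J mu lam ys zs"
    and dual_unique: "\<forall>y z. dual_optimal J mu lam y z \<longrightarrow> y = ys \<and> z = zs"
  shows "(\<exists>E. finite E \<and> (\<forall>e\<in>E. e extreme_point_of S_LP J mu lam) \<and>
              S_LP J mu lam = convex hull E)
    \<and> dual_obj lam ys = 1
    \<and> (\<forall>k. 0 < zs $ k)
    \<and> (\<forall>i k. potentially_basic J mu lam (i,k) \<longrightarrow> ys $ i * mu (i,k) = zs $ k)
    \<and> (\<forall>i k. always_nonbasic J mu lam (i,k) \<longrightarrow> ys $ i * mu (i,k) < zs $ k)
    \<and> (\<forall>i. \<exists>k. potentially_basic J mu lam (i,k))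
    \<and> (\<forall>i. 0 < ys $ i)"
proof -
  obtain xi0 where xi0: "lp_feasible J mu lam xi0 1" and "xi0 \<in> S_LP J mu lam"
    using opt_val S_LP_eq_lp_feasible[OF opt_val] by (auto simp: lp_optimal_def)
  have dual_feasible: "dual_feasible J mu ys zs" using dual_opt by (simp add: dual_optimal_def)
  note strict = unique_dual_optimum_if_not_perturbed_feasible[OF dual_opt dual_unique
      weak_duality[OF dual_feasible xi0]]
  have obj: "dual_obj lam ys = 1"
    using strict(1)[OF server_load_not_perturbed_feasible[OF opt_val full_load]] .
  have zs_pos: "0 < zs $ k" for k
    using strict(2)[OF server_load_not_perturbed_feasible[OF opt_val full_load, of k]]
    by (simp add: inner_axis)
  have basic: "ys $ i * mu (i,k) = zs $ k" if "potentially_basic J mu lam (i,k)" for i k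
    using potentially_basic_dual_tight[OF opt_val full_load dual_feasible obj that] .
  have nonbasic: "ys $ i * mu (i,k) < zs $ k" if "always_nonbasic J mu lam (i,k)" for i k
    using strict(2)[OF always_nonbasic_not_perturbed_feasible[OF opt_val that]]
    by (simp add: inner_axis mult.commute)
  have served: "\<exists>k. potentially_basic J mu lam (i,k)" for i
    using lp_feasible_class_served[OF xi0 lam_pos[rule_format, of i]] \<open>xi0 \<in> S_LP J mu lam\<close>
    by (auto simp: potentially_basic_def)
  have "0 < ys $ i" for i
  proof -
    obtain k where "potentially_basic J mu lam (i,k)" using served by blast
    moreover from this have "0 < mu (i,k)" using mu_pos by (simp add: potentially_basic_def)
    ultimately show ?thesis using basic zs_pos by (metis zero_less_mult_pos2)
  qed
  then show ?thesis
    using S_LP_convex_hull_extreme_points[OF opt_val] obj zs_pos basic nonbasic served by blast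
qed

end
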